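(* Let $g$ be a connected graph, let $\varphi$ be a set of pairwise non-crossing minimal separators of $g$, and let $S\in\varphi$ be a clique of $g$. Let $c_1,\dots,c_k$ be the connected components of $g\setminus S$ and let $\mathcal{C}(S)=\{g_{|V(c_i)\cup N_g(V(c_i))}: 1\le i\le k\}$. Then: (1) neither $S$ nor any subset of $S$ is a minimal separator of any graph in $\mathcal{C}(S)$; (2) for every $S'\in\varphi\setminus\{S\}$ there exists $c\in\mathcal{C}(S)$ with $S'\subseteq V(c)$.
   Context: Graphs are finite, simple and undirected. $g_{|U}$ is the subgraph induced by $U$, $g\setminus S=g_{|V(g)\setminus S}$, and $N_g(U)=\bigcup_{v\in U}N_g(v)\setminus U$. For nodes $u,v$, a set $S\subseteq V(g)$ is a $(u,v)$-separator if $u,v$ lie in distinct connected components of $g\setminus S$; it is a minimal $(u,v)$-separator if no proper subset is one; $S$ is a minimal separator if it is a minimal $(u,v)$-separator for some $u,v$. Two minimal separators $S,T$ cross if there are $u,v\in T$ such that $S$ is a $(u,v)$-separator. *)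

theory Defs
  imports Main
begin

type_synonym 'a graph = "'a set \<times> 'a set set"

definition verts :: "'a graph \<Rightarrow> 'a set" where "verts g = fst g"
definition edges :: "'a graph \<Rightarrow> 'a set set" where "edges g = snd g"

definition wf_graph :: "'a graph \<Rightarrow> bool" where
  "wf_graph g \<longleftrightarrow> finite (verts g) \<and>
     (\<forall>e\<in>edges g. e \<subseteq> verts g \<and> card e = 2)"

definition adj :: "'a graph \<Rightarrow> 'a \<Rightarrow> 'a \<Rightarrow> bool" where
  "adj g u v \<longleftrightarrow> {u, v} \<in> edges g"

definition induced :: "'a graph \<Rightarrow> 'a set \<Rightarrow> 'a graph" where
  "induced g U = (verts g \<inter> U, {e \<in> edges g. e \<subseteq> U})"

definition remove :: "'a graph \<Rightarrow> 'a set \<Rightarrow> 'a graph" where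
  "remove g S = induced g (verts g - S)"

definition nbh :: "'a graph \<Rightarrow> 'a set \<Rightarrow> 'a set" where
  "nbh g U = (\<Union>v\<in>U. {w \<in> verts g. adj g v w}) - U"

definition reach :: "'a graph \<Rightarrow> 'a \<Rightarrow> 'a \<Rightarrow> bool" where
  "reach g u v \<longleftrightarrow> u \<in> verts g \<and> v \<in> verts g \<and>
     (\<lambda>x y. x \<in> verts g \<and> y \<in> verts g \<and> adj g x y)\<^sup>*\<^sup>* u v"

definition connected_graph :: "'a graph \<Rightarrow> bool" where
  "connected_graph g \<longleftrightarrow> (\<forall>u\<in>verts g. \<forall>v\<in>verts g. reach g u v)"

definition components :: "'a graph \<Rightarrow> 'a set set" where
  "components g = {{v. reach g u v} | u. u \<in> verts g}"

definition is_clique :: "'a graph \<Rightarrow> 'a set \<Rightarrow> bool" where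
  "is_clique g S \<longleftrightarrow> S \<subseteq> verts g \<and> (\<forall>u\<in>S. \<forall>v\<in>S. u \<noteq> v \<longrightarrow> adj g u v)"

definition separator :: "'a graph \<Rightarrow> 'a \<Rightarrow> 'a \<Rightarrow> 'a set \<Rightarrow> bool" where
  "separator g u v S \<longleftrightarrow> S \<subseteq> verts g \<and>
     u \<in> verts (remove g S) \<and> v \<in> verts (remove g S) \<and> \<not> reach (remove g S) u v"

definition min_separator_uv :: "'a graph \<Rightarrow> 'a \<Rightarrow> 'a \<Rightarrow> 'a set \<Rightarrow> bool" where
  "min_separator_uv g u v S \<longleftrightarrow> separator g u v S \<and> (\<forall>T. T \<subset> S \<longrightarrow> \<not> separator g u v T)"

definition min_separator :: "'a graph \<Rightarrow> 'a set \<Rightarrow> bool" where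
  "min_separator g S \<longleftrightarrow> (\<exists>u v. min_separator_uv g u v S)"

definition crosses :: "'a graph \<Rightarrow> 'a set \<Rightarrow> 'a set \<Rightarrow> bool" where
  "crosses g S T \<longleftrightarrow> (\<exists>u\<in>T. \<exists>v\<in>T. separator g u v S)"

definition comp_graphs :: "'a graph \<Rightarrow> 'a set \<Rightarrow> 'a graph set" where
  "comp_graphs g S = {induced g (C \<union> nbh g C) | C. C \<in> components (remove g S)}"

end

theory Submission
  imports Defs
begin

text \<open>Let \<open>C\<close> be a component of \<open>g - S\<close>. Since \<open>C\<close> is connected and every vertex of
  \<open>N(C)\<close> has a neighbour in \<open>C\<close>, the graph induced on \<open>C\<close> plus any part of \<open>N(C)\<close> is
  connected; removing \<open>T \<subseteq> S\<close> from \<open>C \<union> N(C)\<close> leaves such a graph, so \<open>T\<close> separates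
  nothing. For the second claim, every vertex of a minimal \<open>(a,b)\<close>-separator has a
  neighbour in the component of \<open>a\<close> and in that of \<open>b\<close>. If \<open>S' \<subseteq> S\<close>, this puts \<open>S'\<close>
  into \<open>N(C)\<close> for the component \<open>C\<close> of \<open>a\<close>. Otherwise pick \<open>c\<^sub>0 \<in> S' - S\<close>: as \<open>S\<close> does not
  cross \<open>S'\<close>, all of \<open>S' - S\<close> lies in the component \<open>C\<close> of \<open>c\<^sub>0\<close>; as \<open>S'\<close> does not cross
  \<open>S\<close>, one side \<open>D\<close> of \<open>S'\<close> misses \<open>S\<close>, and a vertex \<open>x \<in> S' \<inter> S\<close> is joined to \<open>c\<^sub>0\<close>
  through \<open>D\<close>, hence \<open>x \<in> N(C)\<close>.\<close>

abbreviation component_of :: "'a graph \<Rightarrow> 'a \<Rightarrow> 'a set" where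
  "component_of g u \<equiv> {v. reach g u v}"

lemma verts_induced [simp]: "verts (induced g U) = verts g \<inter> U"
  by (simp add: induced_def verts_def)

lemma adj_induced [simp]: "adj (induced g U) x y \<longleftrightarrow> adj g x y \<and> x \<in> U \<and> y \<in> U"
  by (auto simp: adj_def edges_def induced_def)

lemma induced_induced: "induced (induced g U) W = induced g (U \<inter> W)"
  by (auto simp: induced_def verts_def edges_def)

lemma adj_sym: "adj g x y \<Longrightarrow> adj g y x"
  by (simp add: adj_def insert_commute)

lemma mem_nbh_iff: "x \<in> nbh g U \<longleftrightarrow> x \<in> verts g \<and> x \<notin> U \<and> (\<exists>v\<in>U. adj g v x)"
  by (auto simp: nbh_def)

lemma nbh_subset_verts: "nbh g U \<subseteq> verts g"
  by (auto simp: nbh_def)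

lemma reach_refl: "v \<in> verts g \<Longrightarrow> reach g v v"
  by (simp add: reach_def)

lemma reach_in_verts: "reach g u v \<Longrightarrow> u \<in> verts g \<and> v \<in> verts g"
  by (simp add: reach_def)

lemma reach_step: "reach g u v \<Longrightarrow> adj g v w \<Longrightarrow> w \<in> verts g \<Longrightarrow> reach g u w"
  unfolding reach_def by (auto intro: rtranclp.rtrancl_into_rtrancl)

lemma reach_trans: "reach g u v \<Longrightarrow> reach g v w \<Longrightarrow> reach g u w"
  unfolding reach_def by auto

lemma reach_sym: "reach g u v \<Longrightarrow> reach g v u"
proof -
  let ?R = "\<lambda>x y. x \<in> verts g \<and> y \<in> verts g \<and> adj g x y"
  assume uv: "reach g u v"
  have "?R\<^sup>*\<^sup>* u v" using uv by (simp add: reach_def)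
  then have "?R\<^sup>*\<^sup>* v u"
    by (induction rule: rtranclp_induct) (auto intro: converse_rtranclp_into_rtranclp adj_sym)
  then show ?thesis using uv by (simp add: reach_def)
qed

lemma reach_induct [consumes 1, case_names refl step]:
  assumes "reach g u v" "P u"
    and "\<And>y z. reach g u y \<Longrightarrow> P y \<Longrightarrow> adj g y z \<Longrightarrow> z \<in> verts g \<Longrightarrow> P z"
  shows "P v"
proof -
  let ?R = "\<lambda>x y. x \<in> verts g \<and> y \<in> verts g \<and> adj g x y"
  have "?R\<^sup>*\<^sup>* u v" using assms(1) by (simp add: reach_def)
  then show ?thesis
  proof (induction rule: rtranclp_induct)
    case base
    show ?case using assms(2) .
  next
    case (step y z)
    then have "reach g u y" using assms(1) by (simp add: reach_def)
    with step assms(3) show ?case by blast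
  qed
qed

lemma reach_remove_iff:
  "reach (remove g S) u v \<longleftrightarrow> reach (induced g (verts g - S)) u v"
  by (simp add: remove_def)

lemma reach_remove_in_verts:
  "reach (remove g S) u v \<Longrightarrow> u \<in> verts g - S \<and> v \<in> verts g - S"
  using reach_in_verts[of "remove g S" u v] by (simp add: remove_def)

text \<open>A path in \<open>g|U\<close> stays inside the component of its start, so it survives in \<open>g|W\<close>
  for any \<open>W\<close> containing that component.\<close>
lemma reach_induced_restrict:
  assumes "reach (induced g U) u v" and "component_of (induced g U) u \<subseteq> W"
  shows "reach (induced g W) u v"
  using assms(1)
proof (induction rule: reach_induct)
  case refl
  have "u \<in> verts g \<inter> U" using reach_in_verts[OF assms(1)] by simp
  moreover have "u \<in> W" using assms(2) reach_refl[of u "induced g U"] \<open>u \<in> verts g \<inter> U\<close> by auto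
  ultimately show ?case by (intro reach_refl) simp
next
  case (step y z)
  have "z \<in> W" using assms(2) reach_step[OF step(1-3)] by auto
  moreover have "y \<in> W" using reach_in_verts[OF step(4)] by simp
  ultimately show ?case using step(2,3) by (intro reach_step[OF step(4)]) auto
qed

lemma components_remove_iff:
  "C \<in> components (remove g S) \<longleftrightarrow> (\<exists>u \<in> verts g - S. C = component_of (remove g S) u)"
  by (auto simp: components_def remove_def)

lemma component_remove_subset:
  "component_of (remove g S) u \<subseteq> verts g - S"
  using reach_remove_in_verts by fast

lemma not_separator_if_connected_remove:
  "connected_graph (remove g T) \<Longrightarrow> \<not> separator g u v T"
  by (simp add: connected_graph_def separator_def)

lemma connected_component_plus_nbh:
  assumes C: "C \<in> components (remove g S)"
    and W: "C \<subseteq> W" "W \<subseteq> C \<union> nbh g C"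
  shows "connected_graph (induced g W)"
proof -
  obtain u where u: "u \<in> verts g - S" "C = component_of (remove g S) u"
    using C by (auto simp: components_remove_iff)
  have reach_C: "reach (induced g W) u w" if "w \<in> C" for w
  proof (rule reach_induced_restrict)
    show "reach (induced g (verts g - S)) u w" using that u by (simp add: reach_remove_iff)
    show "component_of (induced g (verts g - S)) u \<subseteq> W"
      using u W(1) by (auto simp: reach_remove_iff)
  qed
  have reach_W: "reach (induced g W) u w" if "w \<in> verts (induced g W)" for w
  proof (cases "w \<in> C")
    case True
    then show ?thesis by (rule reach_C)
  next
    case False
    with that W(2) have "w \<in> nbh g C" "w \<in> W" "w \<in> verts g" by auto
    then obtain y where "y \<in> C" "adj g y w" by (auto simp: nbh_def)
    with W(1) \<open>w \<in> W\<close> \<open>w \<in> verts g\<close> show ?thesis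
      by (intro reach_step[OF reach_C[OF \<open>y \<in> C\<close>]]) auto
  qed
  show ?thesis
    unfolding connected_graph_def by (metis reach_W reach_sym reach_trans)
qed

lemma no_min_separator_in_comp_graph:
  assumes "c \<in> comp_graphs g S" and "T \<subseteq> S"
  shows "\<not> min_separator c T"
proof -
  obtain C where C: "C \<in> components (remove g S)" and c: "c = induced g (C \<union> nbh g C)"
    using assms(1) by (auto simp: comp_graphs_def)
  define W where "W = (C \<union> nbh g C) \<inter> (verts g \<inter> (C \<union> nbh g C) - T)"
  have "C \<subseteq> verts g - S"
    using C by (auto simp: components_remove_iff dest: reach_remove_in_verts)
  then have "C \<subseteq> W" using assms(2) by (auto simp: W_def)
  moreover have "W \<subseteq> C \<union> nbh g C" by (auto simp: W_def)
  ultimately have "connected_graph (remove c T)"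
    using connected_component_plus_nbh[OF C] by (simp add: c W_def remove_def induced_induced)
  then show ?thesis
    by (auto simp: min_separator_def min_separator_uv_def dest: not_separator_if_connected_remove)
qed

lemma min_separator_subset_verts: "min_separator g T \<Longrightarrow> T \<subseteq> verts g"
  by (auto simp: min_separator_def min_separator_uv_def separator_def)

lemma min_separator_uv_sym: "min_separator_uv g a b T \<Longrightarrow> min_separator_uv g b a T"
  unfolding min_separator_uv_def separator_def by (meson reach_sym)

text \<open>Minimality: were \<open>x \<in> T\<close> without a neighbour on \<open>a\<close>'s side, \<open>T - {x}\<close> would
  still separate \<open>a\<close> from \<open>b\<close>.\<close>
lemma min_separator_uv_subset_nbh:
  assumes "min_separator_uv g a b T"
  shows "T \<subseteq> nbh g (component_of (remove g T) a)"
proof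
  fix x assume "x \<in> T"
  have sep: "separator g a b T" using assms by (simp add: min_separator_uv_def)
  have "\<exists>y. adj g x y \<and> reach (remove g T) a y"
  proof (rule ccontr)
    assume no_nb: "\<nexists>y. adj g x y \<and> reach (remove g T) a y"
    have "\<not> separator g a b (T - {x})"
      using assms \<open>x \<in> T\<close> by (auto simp: min_separator_uv_def)
    with sep have "reach (induced g (verts g - (T - {x}))) a b"
      by (auto simp: separator_def remove_def)
    then have "reach (remove g T) a b"
    proof (induction rule: reach_induct)
      case refl
      show ?case using sep by (simp add: separator_def reach_refl)
    next
      case (step y z)
      have "z \<noteq> x"
      proof
        assume "z = x"
        with step(2) have "adj g x y" by (simp add: adj_sym)
        with no_nb step(4) show False by blast
      qed
      with step(2,3) have "z \<in> verts g - T" "adj g y z" by auto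
      moreover have "y \<in> verts g - T" using reach_remove_in_verts[OF step(4)] by blast
      ultimately show ?case by (intro reach_step[OF step(4)]) (auto simp: remove_def)
    qed
    with sep show False by (simp add: separator_def)
  qed
  then obtain y where "adj g x y" "reach (remove g T) a y" by blast
  with \<open>x \<in> T\<close> sep reach_remove_in_verts[of g T a x] show "x \<in> nbh g (component_of (remove g T) a)"
    by (auto simp: nbh_def separator_def dest: reach_in_verts adj_sym)
qed

lemma separator_between_sides:
  assumes sep: "separator g a b T"
    and p: "reach (remove g T) a p" and q: "reach (remove g T) b q"
  shows "separator g p q T"
proof -
  have "\<not> reach (remove g T) p q"
  proof
    assume "reach (remove g T) p q"
    then have "reach (remove g T) a b"
      by (rule reach_trans[OF reach_trans[OF p] reach_sym[OF q]])
    with sep show False by (simp add: separator_def)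
  qed
  with sep reach_in_verts[OF p] reach_in_verts[OF q] show ?thesis
    unfolding separator_def by blast
qed

lemma min_separator_side_avoiding:
  assumes "min_separator g T" and "\<not> crosses g T S"
  obtains a b where "min_separator_uv g a b T" "component_of (remove g T) b \<inter> S = {}"
proof -
  obtain a b where ab: "min_separator_uv g a b T"
    using assms(1) by (auto simp: min_separator_def)
  have "component_of (remove g T) a \<inter> S = {} \<or> component_of (remove g T) b \<inter> S = {}"
  proof (rule ccontr)
    assume "\<not> ?thesis"
    then obtain p q where "p \<in> S" "q \<in> S"
      and pq: "reach (remove g T) a p" "reach (remove g T) b q" by blast
    from ab have "separator g a b T" by (simp add: min_separator_uv_def)
    then have "separator g p q T" by (rule separator_between_sides[OF _ pq])
    with assms(2) \<open>p \<in> S\<close> \<open>q \<in> S\<close> show False by (auto simp: crosses_def)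
  qed
  then show thesis using that ab min_separator_uv_sym[OF ab] by blast
qed

lemma uncrossed_in_one_component:
  assumes "\<not> crosses g S S'" "S \<subseteq> verts g" "S' \<subseteq> verts g" "c \<in> S' - S"
  shows "S' - S \<subseteq> component_of (remove g S) c"
proof
  fix v assume v: "v \<in> S' - S"
  show "v \<in> component_of (remove g S) c"
  proof (rule ccontr)
    assume "v \<notin> component_of (remove g S) c"
    with assms(2-4) v have "separator g c v S"
      by (auto simp: separator_def remove_def)
    with assms(1,4) v show False by (auto simp: crosses_def)
  qed
qed

lemma uncrossed_subset_component_nbh:
  assumes "min_separator g S'" "\<not> crosses g S S'" "\<not> crosses g S' S"
    and "S \<subseteq> verts g" "c \<in> S' - S"
  shows "S' \<subseteq> component_of (remove g S) c \<union> nbh g (component_of (remove g S) c)"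
    (is "_ \<subseteq> ?C \<union> nbh g ?C")
proof
  obtain a b where ab: "min_separator_uv g a b S'" and
    avoid: "component_of (remove g S') b \<inter> S = {}"
    using min_separator_side_avoiding[OF assms(1,3)] .
  let ?D = "component_of (remove g S') b"
  have S'_D: "S' \<subseteq> nbh g ?D"
    using min_separator_uv_subset_nbh[OF min_separator_uv_sym[OF ab]] .
  have S'v: "S' \<subseteq> verts g"
    using ab by (simp add: min_separator_uv_def separator_def)
  fix x assume "x \<in> S'"
  show "x \<in> ?C \<union> nbh g ?C"
  proof (cases "x \<in> S")
    case False
    then show ?thesis
      using uncrossed_in_one_component[OF assms(2,4) S'v assms(5)] \<open>x \<in> S'\<close> by blast
  next
    case True
    have "c \<in> nbh g ?D" "x \<in> nbh g ?D" using S'_D assms(5) \<open>x \<in> S'\<close> by auto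
    then obtain w w' where w: "reach (remove g S') b w" "adj g w c"
      and w': "reach (remove g S') b w'" "adj g w' x"
      unfolding mem_nbh_iff mem_Collect_eq by blast
    have "component_of (remove g S') w' \<subseteq> verts g - S"
    proof
      fix v assume "v \<in> component_of (remove g S') w'"
      then have "reach (remove g S') b v" using reach_trans[OF w'(1)] by blast
      with avoid show "v \<in> verts g - S" by (auto dest: reach_remove_in_verts)
    qed
    then have w'_w: "reach (remove g S) w' w"
      using reach_induced_restrict[of g "verts g - S'" w' w "verts g - S"]
        reach_trans[OF reach_sym[OF w'(1)] w(1)]
      by (simp add: reach_remove_iff)
    have "c \<in> verts g - S" using assms(5) S'v by blast
    with w(2) reach_remove_in_verts[OF w'_w] have "reach (remove g S) w' c"
      by (intro reach_step[OF w'_w]) (auto simp: remove_def)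
    then have "w' \<in> ?C" by (simp add: reach_sym)
    moreover have "x \<notin> ?C" using True reach_remove_in_verts[of g S c x] by blast
    ultimately have "x \<in> nbh g ?C"
      using w'(2) \<open>x \<in> S'\<close> S'v unfolding mem_nbh_iff by blast
    then show ?thesis ..
  qed
qed

lemma comp_graph_of_component:
  "u \<in> verts g - S \<Longrightarrow>
    induced g (component_of (remove g S) u \<union> nbh g (component_of (remove g S) u)) \<in> comp_graphs g S"
  unfolding comp_graphs_def components_remove_iff by blast

theorem lemma6:
  fixes g :: "'a graph" and \<phi> :: "'a set set" and S :: "'a set"
  assumes "wf_graph g"
    and "connected_graph g"
    and "\<forall>T\<in>\<phi>. min_separator g T"
    and "\<forall>T\<in>\<phi>. \<forall>T'\<in>\<phi>. T \<noteq> T' \<longrightarrow> \<not> crosses g T T'"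
    and "S \<in> \<phi>"
    and "is_clique g S"
  shows "(\<forall>c\<in>comp_graphs g S. \<forall>T. T \<subseteq> S \<longrightarrow> \<not> min_separator c T)
       \<and> (\<forall>S'\<in>\<phi> - {S}. \<exists>c\<in>comp_graphs g S. S' \<subseteq> verts c)"
proof (intro conjI ballI allI impI)
  show "\<not> min_separator c T" if "c \<in> comp_graphs g S" "T \<subseteq> S" for c T
    using no_min_separator_in_comp_graph that .
next
  fix S' assume S': "S' \<in> \<phi> - {S}"
  obtain a b where ab: "min_separator_uv g a b S"
    using assms(3,5) unfolding min_separator_def by blast
  then have Sv: "S \<subseteq> verts g" and a: "a \<in> verts g - S"
    by (auto simp: min_separator_uv_def separator_def remove_def)
  obtain u where u: "u \<in> verts g - S"
    and S'_sub: "S' \<subseteq> component_of (remove g S) u \<union> nbh g (component_of (remove g S) u)"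
  proof (cases "S' \<subseteq> S")
    case True
    with min_separator_uv_subset_nbh[OF ab] show thesis by (intro that[OF a]) blast
  next
    case False
    then obtain c where "c \<in> S' - S" by blast
    have "c \<in> verts g - S"
      using \<open>c \<in> S' - S\<close> min_separator_subset_verts assms(3) S' by blast
    moreover have "\<not> crosses g S S'" "\<not> crosses g S' S" using assms(4,5) S' by blast+
    moreover have "min_separator g S'" using assms(3) S' by blast
    ultimately show thesis
      using that uncrossed_subset_component_nbh[OF _ _ _ Sv \<open>c \<in> S' - S\<close>] by blast
  qed
  let ?C = "component_of (remove g S) u"
  have "S' \<subseteq> verts (induced g (?C \<union> nbh g ?C))"
    using S'_sub component_remove_subset[of g S u] nbh_subset_verts[of g ?C] by auto
  then show "\<exists>c\<in>comp_graphs g S. S' \<subseteq> verts c"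
    using comp_graph_of_component[OF u] by blast
qed

end
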